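(* Let $G=(V,E)$ be an $n$-node graph, let $e \ge 1$ be an integer, and let $\mathcal{C}$ be the output of $\mathbf{cluster}(G, e)$. Then there are at most $ne$ edges in $G$ with both endpoints unclustered in $\mathcal{C}$.
   Context: $G$ is an unweighted undirected graph. The procedure $\mathbf{cluster}(G,e)$ is: initialize $\mathcal{C} = \emptyset$ and unmark all nodes; while there is an unmarked node $u$ with at least $e-1$ unmarked neighbors, let $C$ be the set consisting of $u$ together with any $e-1$ of its unmarked neighbors, mark all nodes of $C$, and add $C$ to $\mathcal{C}$; finally return $\mathcal{C}$. Each $C \in \mathcal{C}$ is called a cluster; a node is clustered if it belongs to some cluster in $\mathcal{C}$ and unclustered otherwise. *)

theory Defs
  imports Main
begin

definition simple_graph :: "'a set \<Rightarrow> 'a set set \<Rightarrow> bool" where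
  "simple_graph V E \<longleftrightarrow> finite V \<and> (\<forall>x\<in>E. \<exists>u v. x = {u, v} \<and> u \<in> V \<and> v \<in> V \<and> u \<noteq> v)"

definition nbrs :: "'a set \<Rightarrow> 'a set set \<Rightarrow> 'a \<Rightarrow> 'a set" where
  "nbrs V E u = {v \<in> V. {u, v} \<in> E}"

text \<open>Reachable states of the while-loop of cluster(G,e): the current collection of clusters;
  the marked nodes are exactly the union of the clusters.\<close>
inductive cluster_reach :: "'a set \<Rightarrow> 'a set set \<Rightarrow> nat \<Rightarrow> 'a set set \<Rightarrow> bool"
  for V E e where
  start: "cluster_reach V E e {}"
| step: "\<lbrakk> cluster_reach V E e Cs; u \<in> V; u \<notin> \<Union>Cs;
           S \<subseteq> nbrs V E u - \<Union>Cs; card S = e - 1 \<rbrakk>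
         \<Longrightarrow> cluster_reach V E e (insert (insert u S) Cs)"

definition cluster_output :: "'a set \<Rightarrow> 'a set set \<Rightarrow> nat \<Rightarrow> 'a set set \<Rightarrow> bool" where
  "cluster_output V E e Cs \<longleftrightarrow> cluster_reach V E e Cs \<and>
     \<not> (\<exists>u\<in>V. u \<notin> \<Union>Cs \<and> e - 1 \<le> card (nbrs V E u - \<Union>Cs))"

end

theory Submission
  imports Defs
begin

text \<open>When the loop stops, every unclustered node has fewer than \<open>e - 1\<close> unclustered neighbours.
  Charging each edge between unclustered nodes to one of its endpoints therefore charges at most
  \<open>e\<close> edges to each of the at most \<open>n\<close> unclustered nodes.\<close>

lemma simple_graph_edge_cases:
  assumes "simple_graph V E" "x \<in> E"
  obtains u v where "x = {u, v}" "u \<in> V" "v \<in> V" "u \<noteq> v"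
  using assms unfolding simple_graph_def by blast

lemma card_edges_within_le:
  assumes G: "simple_graph V E" and "W \<subseteq> V"
    and deg: "\<And>u. u \<in> W \<Longrightarrow> card (nbrs V E u \<inter> W) \<le> d"
  shows "card {x \<in> E. x \<subseteq> W} \<le> card W * d"
proof -
  have fW: "finite W" using G \<open>W \<subseteq> V\<close> unfolding simple_graph_def by (auto intro: finite_subset)
  have fN: "finite (nbrs V E u \<inter> W)" for u using fW by simp
  let ?star = "\<lambda>u. (\<lambda>v. {u, v}) ` (nbrs V E u \<inter> W)"
  have "{x \<in> E. x \<subseteq> W} \<subseteq> (\<Union>u\<in>W. ?star u)"
  proof
    fix x assume x: "x \<in> {x \<in> E. x \<subseteq> W}"
    then obtain u v where uv: "x = {u, v}" "u \<in> V" "v \<in> V"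
      using G by (auto elim: simple_graph_edge_cases)
    with x have "u \<in> W" "v \<in> nbrs V E u \<inter> W" by (auto simp: nbrs_def)
    with uv show "x \<in> (\<Union>u\<in>W. ?star u)" by blast
  qed
  then have "card {x \<in> E. x \<subseteq> W} \<le> card (\<Union>u\<in>W. ?star u)"
    using fW fN by (intro card_mono) auto
  also have "\<dots> \<le> (\<Sum>u\<in>W. card (?star u))"
    using fW by (rule card_UN_le)
  also have "\<dots> \<le> (\<Sum>u\<in>W. d)"
    by (intro sum_mono le_trans[OF card_image_le[OF fN] deg])
  finally show ?thesis by simp
qed

lemma cluster_output_unclustered_degree:
  assumes "cluster_output V E e Cs" "u \<in> V - \<Union>Cs"
  shows "card (nbrs V E u \<inter> (V - \<Union>Cs)) < e - 1"
proof -
  have "nbrs V E u \<inter> (V - \<Union>Cs) = nbrs V E u - \<Union>Cs"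
    by (auto simp: nbrs_def)
  with assms show ?thesis
    unfolding cluster_output_def by (metis DiffD1 DiffD2 not_le)
qed

theorem claim1:
  fixes V :: "'a set" and E :: "'a set set" and e :: nat and Cs :: "'a set set"
  assumes "simple_graph V E"
    and "e \<ge> 1"
    and "cluster_output V E e Cs"
  shows "card {x \<in> E. x \<subseteq> V - \<Union>Cs} \<le> card V * e"
proof -
  have "card {x \<in> E. x \<subseteq> V - \<Union>Cs} \<le> card (V - \<Union>Cs) * e"
  proof (rule card_edges_within_le[OF assms(1)])
    fix u assume "u \<in> V - \<Union>Cs"
    with cluster_output_unclustered_degree[OF assms(3)]
    show "card (nbrs V E u \<inter> (V - \<Union>Cs)) \<le> e" by fastforce
  qed auto
  also have "\<dots> \<le> card V * e"
    using assms(1) unfolding simple_graph_def by (intro mult_le_mono1 card_mono) auto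
  finally show ?thesis .
qed

end
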